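(* For every finite game $G$, $\mathcal{X}^{CCE}\subseteq\mathcal{X}^{S\text{-}NF}$; that is, for every coarse correlated equilibrium $x$ of $G$ there exists a stable $\mathbf{x}=[x_\pi]$ of the Stackelberg game $(G,N,\emptyset)$ with $x_\varnothing=x$.
   Context: A finite game is $G=(N,\{S_p\}_{p\in N},\{u_p\}_{p\in N})$ with players $N=\{1,\dots,n\}$, finite nonempty strategy sets $S_p$, and utilities $u_p:S\to\mathbb{R}$ on $S=\prod_{p\in N}S_p$; write $s=(s_p,s_{-p})$ with $s_{-p}\in S_{-p}=\prod_{q\neq p}S_q$. $\mathcal{X}=\Delta(S)$ is the set of probability distributions on $S$ and $u_p(x)=\sum_{s\in S}x(s)u_p(s)$ for $x\in\mathcal{X}$. For $P\subseteq N$, $\mathcal{X}^{CE}_P$ is the set of $x\in\mathcal{X}$ such that for every $p\in P$ and all $s_p\neq s_p'\in S_p$: $\sum_{s_{-p}\in S_{-p}} x(s_p,s_{-p})\,(u_p(s_p,s_{-p})-u_p(s_p',s_{-p}))\ge 0$; $\mathcal{X}^{CE}=\mathcal{X}^{CE}_N$ is the set of correlated equilibria of $G$. $\mathcal{X}^{CCE}$ is the set of coarse correlated equilibria of $G$: $x\in\mathcal{X}$ with $\sum_{s\in S}x(s)(u_p(s)-u_p(s_p',s_{-p}))\ge 0$ for all $p\in N$, $s_p'\in S_p$. A Stackelberg game (SG) is a triple $(G,L,F)$ with $L\cup F=N$ and $L\cap F=\emptyset$ (leaders and followers). For $P\subseteq N$, $\Pi_P$ is the set of ordered subsets of $P$ (finite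 sequences of pairwise distinct elements of $P$, including the empty sequence $\varnothing$); for $\pi\in\Pi_P$ and $p\in P$ not occurring in $\pi$, $\pi p$ is $\pi$ with $p$ appended; when used as a set, $\pi$ means its set of entries. $\mathbf{X}=\prod_{\pi\in\Pi_L}\mathcal{X}^{CE}_{\pi\cup F}$, with elements $\mathbf{x}=[x_\pi]_{\pi\in\Pi_L}$. For $\mathbf{x}\in\mathbf{X}$ and $\pi\in\Pi_L$, $x_\pi$ is stable if $u_p(x_\pi)\ge u_p(x_{\pi p})$ for all $p\in L\setminus\pi$; $\mathbf{x}$ is stable if $x_\varnothing$ is stable, and perfectly stable if $x_\pi$ is stable for every $\pi\in\Pi_L$; $\mathbf{X}^{S}$ and $\mathbf{X}^{PS}$ denote the sets of stable and perfectly stable elements of $\mathbf{X}$. $\mathcal{X}^{S\text{-}NF}=\{x_\varnothing:\mathbf{x}\in\mathbf{X}^S\}$ computed for the SG $(G,N,\emptyset)$ in which every player is a leader. *)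

theory Defs
  imports Complex_Main "HOL-Library.FuncSet"
begin

text \<open>A (correlated) distribution x on profiles is a function profile \<Rightarrow> real, considered on the
profile set only.\<close>

definition finite_game :: "'p set \<Rightarrow> ('p \<Rightarrow> 's set) \<Rightarrow> bool" where
  "finite_game N S \<longleftrightarrow> finite N \<and> (\<forall>p\<in>N. finite (S p) \<and> S p \<noteq> {})"

definition profiles :: "'p set \<Rightarrow> ('p \<Rightarrow> 's set) \<Rightarrow> ('p \<Rightarrow> 's) set" where
  "profiles N S = PiE N S"

definition distributions :: "'p set \<Rightarrow> ('p \<Rightarrow> 's set) \<Rightarrow> (('p \<Rightarrow> 's) \<Rightarrow> real) set" where
  "distributions N S = {x. (\<forall>s\<in>profiles N S. 0 \<le> x s) \<and> (\<Sum>s\<in>profiles N S. x s) = 1}"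

definition exp_util ::
  "'p set \<Rightarrow> ('p \<Rightarrow> 's set) \<Rightarrow> ('p \<Rightarrow> ('p \<Rightarrow> 's) \<Rightarrow> real) \<Rightarrow> 'p \<Rightarrow> (('p \<Rightarrow> 's) \<Rightarrow> real) \<Rightarrow> real" where
  "exp_util N S u p x = (\<Sum>s\<in>profiles N S. x s * u p s)"

text \<open>X^CE_P: the CE constraints imposed only for players in P.
 Summing over s_{-p} with s_p fixed is summing over profiles s with s p = a.\<close>
definition CE_P ::
  "'p set \<Rightarrow> ('p \<Rightarrow> 's set) \<Rightarrow> ('p \<Rightarrow> ('p \<Rightarrow> 's) \<Rightarrow> real) \<Rightarrow> 'p set \<Rightarrow> (('p \<Rightarrow> 's) \<Rightarrow> real) set" where
  "CE_P N S u P = {x \<in> distributions N S.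
     \<forall>p\<in>P. \<forall>a\<in>S p. \<forall>b\<in>S p. a \<noteq> b \<longrightarrow>
       0 \<le> (\<Sum>s\<in>{s\<in>profiles N S. s p = a}. x s * (u p s - u p (s(p := b))))}"

definition CCE ::
  "'p set \<Rightarrow> ('p \<Rightarrow> 's set) \<Rightarrow> ('p \<Rightarrow> ('p \<Rightarrow> 's) \<Rightarrow> real) \<Rightarrow> (('p \<Rightarrow> 's) \<Rightarrow> real) set" where
  "CCE N S u = {x \<in> distributions N S.
     \<forall>p\<in>N. \<forall>b\<in>S p. 0 \<le> (\<Sum>s\<in>profiles N S. x s * (u p s - u p (s(p := b))))}"

definition ordered_subsets :: "'p set \<Rightarrow> 'p list set" where
  "ordered_subsets P = {\<pi>. distinct \<pi> \<and> set \<pi> \<subseteq> P}"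

definition SG_X ::
  "'p set \<Rightarrow> ('p \<Rightarrow> 's set) \<Rightarrow> ('p \<Rightarrow> ('p \<Rightarrow> 's) \<Rightarrow> real) \<Rightarrow> 'p set \<Rightarrow> 'p set
    \<Rightarrow> ('p list \<Rightarrow> ('p \<Rightarrow> 's) \<Rightarrow> real) set" where
  "SG_X N S u L F = {xx. \<forall>\<pi>\<in>ordered_subsets L. xx \<pi> \<in> CE_P N S u (set \<pi> \<union> F)}"

definition stable_at ::
  "'p set \<Rightarrow> ('p \<Rightarrow> 's set) \<Rightarrow> ('p \<Rightarrow> ('p \<Rightarrow> 's) \<Rightarrow> real) \<Rightarrow> 'p set
    \<Rightarrow> ('p list \<Rightarrow> ('p \<Rightarrow> 's) \<Rightarrow> real) \<Rightarrow> 'p list \<Rightarrow> bool" where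
  "stable_at N S u L xx \<pi> \<longleftrightarrow>
     (\<forall>p\<in>L - set \<pi>. exp_util N S u p (xx \<pi>) \<ge> exp_util N S u p (xx (\<pi> @ [p])))"

definition SG_X_stable ::
  "'p set \<Rightarrow> ('p \<Rightarrow> 's set) \<Rightarrow> ('p \<Rightarrow> ('p \<Rightarrow> 's) \<Rightarrow> real) \<Rightarrow> 'p set \<Rightarrow> 'p set
    \<Rightarrow> ('p list \<Rightarrow> ('p \<Rightarrow> 's) \<Rightarrow> real) set" where
  "SG_X_stable N S u L F = {xx \<in> SG_X N S u L F. stable_at N S u L xx []}"

definition S_NF ::
  "'p set \<Rightarrow> ('p \<Rightarrow> 's set) \<Rightarrow> ('p \<Rightarrow> ('p \<Rightarrow> 's) \<Rightarrow> real) \<Rightarrow> (('p \<Rightarrow> 's) \<Rightarrow> real) set" where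
  "S_NF N S u = {xx [] | xx. xx \<in> SG_X_stable N S u N {}}"

end

theory Submission
  imports Defs
begin

text \<open>
Given a coarse correlated equilibrium x, take x itself for the empty sequence of leaders. For a
single leader p, redirect the play of x so that p always uses a strategy b maximising the payoff
p would get by deviating to b while the others follow x: the resulting distribution satisfies the
correlated-equilibrium constraints of p, and p's payoff under it is that best deviation payoff,
which the coarse equilibrium inequalities bound by p's payoff under x. This makes x stable. All
longer sequences of leaders receive a correlated equilibrium of the game, which exists by the
argument of Hart and Schmeidler: by Ville's theorem of the alternative (a consequence of
Fourier--Motzkin elimination) it suffices that no nonnegative weighting of the equilibrium
constraints is negative at every profile, and a product of stationary distributions of the
weight matrices makes any such weighted sum vanish.
\<close>

section \<open>Ville's theorem of the alternative\<close>

text \<open>Convex combinations of vectors indexed by an arbitrary type, for which no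
  \<open>real_vector\<close> instance (and hence no \<open>convex hull\<close>) is available.\<close>
definition mixtures :: "('i \<Rightarrow> real) set \<Rightarrow> ('i \<Rightarrow> real) set" where
  "mixtures V = {z. \<exists>q. (\<forall>v\<in>V. 0 \<le> q v) \<and> sum q V = 1 \<and> z = (\<lambda>i. \<Sum>v\<in>V. q v * v i)}"

lemma mixtures_pair:
  assumes "finite V" "v \<in> V" "w \<in> V" "0 \<le> \<alpha>" "0 \<le> \<beta>" "\<alpha> + \<beta> = 1"
  shows "(\<lambda>i. \<alpha> * v i + \<beta> * w i) \<in> mixtures V"
proof -
  define q where "q u = (if u = v then \<alpha> else 0) + (if u = w then \<beta> else 0)" for u
  have "(\<Sum>u\<in>V. q u * u i) = \<alpha> * v i + \<beta> * w i" for i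
    using assms by (simp add: q_def distrib_right sum.distrib if_distrib[of "\<lambda>c. c * _"] sum.delta cong: if_cong)
  moreover have "sum q V = 1" using assms by (simp add: q_def sum.distrib sum.delta)
  moreover have "\<forall>u\<in>V. 0 \<le> q u" using assms by (simp add: q_def)
  ultimately show ?thesis unfolding mixtures_def by (intro CollectI exI[of _ q]) auto
qed

lemma mem_mixtures_self: "finite V \<Longrightarrow> v \<in> V \<Longrightarrow> v \<in> mixtures V"
  using mixtures_pair[of V v v 1 0] by simp

lemma mixtures_subset_mixtures:
  assumes sub: "V' \<subseteq> mixtures V"
  shows "mixtures V' \<subseteq> mixtures V"
proof
  fix z assume "z \<in> mixtures V'"
  then obtain q' where q': "\<forall>v'\<in>V'. 0 \<le> q' v'" "sum q' V' = 1" "z = (\<lambda>i. \<Sum>v'\<in>V'. q' v' * v' i)"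
    by (auto simp: mixtures_def)
  from sub obtain r where r: "\<forall>v'\<in>V'. (\<forall>v\<in>V. 0 \<le> r v' v) \<and> sum (r v') V = 1 \<and> v' = (\<lambda>i. \<Sum>v\<in>V. r v' v * v i)"
    unfolding mixtures_def subset_iff mem_Collect_eq by metis
  define q where "q v = (\<Sum>v'\<in>V'. q' v' * r v' v)" for v
  have "\<forall>v\<in>V. 0 \<le> q v" using q' r by (auto simp: q_def intro!: sum_nonneg)
  moreover have "sum q V = 1"
  proof -
    have "sum q V = (\<Sum>v'\<in>V'. q' v' * sum (r v') V)"
      unfolding q_def by (subst sum.swap) (simp add: sum_distrib_left)
    also have "\<dots> = 1" using r q' by simp
    finally show ?thesis .
  qed
  moreover have "z i = (\<Sum>v\<in>V. q v * v i)" for i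
  proof -
    have "z i = (\<Sum>v'\<in>V'. q' v' * (\<Sum>v\<in>V. r v' v * v i))"
      unfolding q'(3) using r by (intro sum.cong refl) (metis (mono_tags, lifting))
    also have "\<dots> = (\<Sum>v'\<in>V'. \<Sum>v\<in>V. q' v' * r v' v * v i)"
      by (simp add: sum_distrib_left mult.assoc)
    also have "\<dots> = (\<Sum>v\<in>V. q v * v i)"
      unfolding q_def by (subst sum.swap) (simp add: sum_distrib_right)
    finally show ?thesis .
  qed
  ultimately show "z \<in> mixtures V" unfolding mixtures_def by blast
qed

lemma mixtures_coordinate_nonneg:
  assumes "\<forall>v\<in>V. 0 \<le> v i" "z \<in> mixtures V"
  shows "0 \<le> z i"
  using assms by (auto simp: mixtures_def intro!: sum_nonneg)

lemma exists_real_between: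
  fixes A B :: "real set"
  assumes "finite A" "A \<noteq> {}" "finite B" "\<forall>a\<in>A. \<forall>b\<in>B. a < b"
  shows "\<exists>t. (\<forall>a\<in>A. a < t) \<and> (\<forall>b\<in>B. t < b)"
proof (cases "B = {}")
  case True
  have "\<forall>a\<in>A. a < Max A + 1" using assms by (auto intro: le_less_trans[OF Max_ge])
  then show ?thesis using True by blast
next
  case False
  have "Max A < Min B" using assms False by (simp add: Max_less_iff Min_gr_iff)
  moreover have "\<forall>a\<in>A. a \<le> Max A" "\<forall>b\<in>B. Min B \<le> b" using assms by simp_all
  ultimately show ?thesis by (intro exI[of _ "(Max A + Min B) / 2"]) fastforce
qed

lemma exists_threshold:
  fixes a L :: "'v \<Rightarrow> real"
  assumes "finite V"
    and nonneg: "\<forall>v\<in>V. 0 \<le> a v \<longrightarrow> L v < 0"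
    and pairs: "\<forall>v\<in>V. \<forall>w\<in>V. a v < 0 \<longrightarrow> 0 \<le> a w \<longrightarrow> a w * L v < a v * L w"
  shows "\<exists>t\<ge>0. \<forall>v\<in>V. t * a v + L v < 0"
proof -
  define A where "A = insert 0 ((\<lambda>v. L v / - a v) ` {v\<in>V. a v < 0})"
  define B where "B = (\<lambda>w. - L w / a w) ` {w\<in>V. 0 < a w}"
  have "\<forall>x\<in>A. \<forall>y\<in>B. x < y"
  proof (intro ballI)
    fix x y assume "x \<in> A" "y \<in> B"
    then obtain w where w: "w \<in> V" "0 < a w" "y = - L w / a w" by (auto simp: B_def)
    have "L w < 0" using nonneg w by auto
    show "x < y"
    proof (cases "x = 0")
      case False
      then obtain v where v: "v \<in> V" "a v < 0" "x = L v / - a v" using \<open>x \<in> A\<close> by (auto simp: A_def)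
      have "a w * L v < a v * L w" using pairs v w by simp
      then have "L v / - a v < - L w / a w" using v w by (simp add: field_simps)
      then show ?thesis using v w by simp
    qed (use w \<open>L w < 0\<close> in \<open>simp add: divide_neg_pos\<close>)
  qed
  moreover have "finite A" "A \<noteq> {}" "finite B" using \<open>finite V\<close> by (simp_all add: A_def B_def)
  ultimately obtain t where t: "\<forall>x\<in>A. x < t" "\<forall>y\<in>B. t < y"
    using exists_real_between by meson
  have "t * a v + L v < 0" if "v \<in> V" for v
  proof (cases "a v" "0 :: real" rule: linorder_cases)
    case less
    then have "L v / - a v < t" using t(1) that by (auto simp: A_def)
    then show ?thesis using less by (simp add: field_simps)
  next
    case greater
    then have "t < - L v / a v" using t(2) that by (auto simp: B_def)
    then show ?thesis using greater by (simp add: field_simps)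
  qed (use nonneg that in auto)
  moreover have "0 \<le> t" using t(1) by (auto simp: A_def)
  ultimately show ?thesis by blast
qed

text \<open>The point of the segment from v to w at which coordinate i0 vanishes.\<close>
definition fm_combination :: "'i \<Rightarrow> ('i \<Rightarrow> real) \<Rightarrow> ('i \<Rightarrow> real) \<Rightarrow> 'i \<Rightarrow> real" where
  "fm_combination i0 v w = (\<lambda>i. (w i0 * v i - v i0 * w i) / (w i0 - v i0))"

definition fm_eliminate :: "'i \<Rightarrow> ('i \<Rightarrow> real) set \<Rightarrow> ('i \<Rightarrow> real) set" where
  "fm_eliminate i0 V = {v\<in>V. 0 \<le> v i0}
     \<union> (\<lambda>(v, w). fm_combination i0 v w) ` ({v\<in>V. v i0 < 0} \<times> {w\<in>V. 0 \<le> w i0})"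

lemma finite_fm_eliminate: "finite V \<Longrightarrow> finite (fm_eliminate i0 V)"
  by (simp add: fm_eliminate_def)

lemma fm_eliminate_nonneg: "\<forall>v\<in>fm_eliminate i0 V. 0 \<le> v i0"
  by (auto simp: fm_eliminate_def fm_combination_def)

lemma fm_combination_in_mixtures:
  assumes "finite V" "v \<in> V" "w \<in> V" "v i0 < 0" "0 \<le> w i0"
  shows "fm_combination i0 v w \<in> mixtures V"
proof -
  have "fm_combination i0 v w = (\<lambda>i. w i0 / (w i0 - v i0) * v i + - v i0 / (w i0 - v i0) * w i)"
    by (simp add: fm_combination_def diff_divide_distrib)
  also have "\<dots> \<in> mixtures V"
  proof (rule mixtures_pair)
    have "0 < w i0 - v i0" using assms by simp
    then show "w i0 / (w i0 - v i0) + - v i0 / (w i0 - v i0) = 1"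
      by (simp add: diff_divide_distrib[symmetric])
  qed (use assms in \<open>auto simp: divide_nonpos_pos\<close>)
  finally show ?thesis .
qed

lemma fm_eliminate_subset_mixtures: "finite V \<Longrightarrow> fm_eliminate i0 V \<subseteq> mixtures V"
  by (auto simp: fm_eliminate_def intro: mem_mixtures_self fm_combination_in_mixtures)

lemma sum_fm_combination:
  "(\<Sum>i\<in>I. y i * fm_combination i0 v w i)
    = (w i0 * (\<Sum>i\<in>I. y i * v i) - v i0 * (\<Sum>i\<in>I. y i * w i)) / (w i0 - v i0)"
  by (simp add: fm_combination_def sum_divide_distrib[symmetric] sum_subtractf sum_distrib_left
      algebra_simps)

lemma fm_eliminate_separation_lift:
  assumes "finite I" "finite V" "i0 \<notin> I"
    and y': "\<forall>i\<in>I. 0 \<le> y' i" "\<forall>v\<in>fm_eliminate i0 V. (\<Sum>i\<in>I. y' i * v i) < 0"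
  shows "\<exists>y. (\<forall>i\<in>insert i0 I. 0 \<le> y i) \<and> (\<forall>v\<in>V. (\<Sum>i\<in>insert i0 I. y i * v i) < 0)"
proof -
  define L where "L v = (\<Sum>i\<in>I. y' i * v i)" for v :: "'a \<Rightarrow> real"
  have "\<exists>t\<ge>0. \<forall>v\<in>V. t * v i0 + L v < 0"
  proof (rule exists_threshold)
    show "\<forall>v\<in>V. 0 \<le> v i0 \<longrightarrow> L v < 0"
      using y'(2) by (auto simp: L_def fm_eliminate_def)
    show "\<forall>v\<in>V. \<forall>w\<in>V. v i0 < 0 \<longrightarrow> 0 \<le> w i0 \<longrightarrow> w i0 * L v < v i0 * L w"
    proof (intro ballI impI)
      fix v w assume vw: "v \<in> V" "w \<in> V" "v i0 < 0" "0 \<le> w i0"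
      then have "fm_combination i0 v w \<in> fm_eliminate i0 V" by (auto simp: fm_eliminate_def)
      then have "(\<Sum>i\<in>I. y' i * fm_combination i0 v w i) < 0" using y'(2) by blast
      then have "(w i0 * L v - v i0 * L w) / (w i0 - v i0) < 0"
        by (simp add: sum_fm_combination L_def)
      then show "w i0 * L v < v i0 * L w" using vw by (simp add: divide_less_0_iff)
    qed
  qed (use assms in simp)
  then obtain t where t: "0 \<le> t" "\<forall>v\<in>V. t * v i0 + L v < 0" by blast
  have "(\<Sum>i\<in>insert i0 I. (y'(i0 := t)) i * v i) = t * v i0 + L v" for v
  proof -
    have "(\<Sum>i\<in>I. (y'(i0 := t)) i * v i) = L v" using assms(3) by (auto simp: L_def intro: sum.cong)
    then show ?thesis using assms(1,3) by simp
  qed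
  then show ?thesis using t y'(1) by (intro exI[of _ "y'(i0 := t)"]) auto
qed

lemma fm_eliminate_mixture_lift:
  assumes "finite V" "z \<in> mixtures (fm_eliminate i0 V)" "\<forall>i\<in>I. 0 \<le> z i"
  shows "z \<in> mixtures V" "\<forall>i\<in>insert i0 I. 0 \<le> z i"
proof -
  show "z \<in> mixtures V"
    using mixtures_subset_mixtures[OF fm_eliminate_subset_mixtures[OF assms(1)]] assms(2) ..
  have "0 \<le> z i0" using fm_eliminate_nonneg assms(2) by (rule mixtures_coordinate_nonneg)
  then show "\<forall>i\<in>insert i0 I. 0 \<le> z i" using assms(3) by simp
qed

theorem ville_alternative_mixtures:
  fixes V :: "('i \<Rightarrow> real) set"
  assumes "finite I" "finite V" "V \<noteq> {}"
  shows "(\<exists>z\<in>mixtures V. \<forall>i\<in>I. 0 \<le> z i)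
    \<or> (\<exists>y. (\<forall>i\<in>I. 0 \<le> y i) \<and> (\<forall>v\<in>V. (\<Sum>i\<in>I. y i * v i) < 0))"
  using assms
proof (induction I arbitrary: V rule: finite_induct)
  case empty
  then show ?case using mem_mixtures_self by blast
next
  case (insert i0 I V)
  show ?case
  proof (cases "\<exists>v\<in>V. 0 \<le> v i0")
    case False
    have "(\<Sum>i\<in>insert i0 I. (if i = i0 then 1 else 0) * v i) = v i0" for v :: "'i \<Rightarrow> real"
      using insert.hyps by (simp add: if_distrib[of "\<lambda>c. c * _"] sum.delta cong: if_cong)
    then show ?thesis using False by (intro disjI2 exI[of _ "\<lambda>i. if i = i0 then 1 else 0"]) auto
  next
    case True
    have "finite (fm_eliminate i0 V)" using insert.prems(1) by (rule finite_fm_eliminate)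
    moreover have "fm_eliminate i0 V \<noteq> {}" using True by (auto simp: fm_eliminate_def)
    ultimately consider
        (mixture) "\<exists>z\<in>mixtures (fm_eliminate i0 V). \<forall>i\<in>I. 0 \<le> z i"
      | (separation) "\<exists>y. (\<forall>i\<in>I. 0 \<le> y i) \<and> (\<forall>v\<in>fm_eliminate i0 V. (\<Sum>i\<in>I. y i * v i) < 0)"
      using insert.IH by blast
    then show ?thesis
    proof cases
      case mixture
      then obtain z where "z \<in> mixtures (fm_eliminate i0 V)" "\<forall>i\<in>I. 0 \<le> z i" by blast
      from fm_eliminate_mixture_lift[OF insert.prems(1) this] show ?thesis by blast
    next
      case separation
      then obtain y where "\<forall>i\<in>I. 0 \<le> y i" "\<forall>v\<in>fm_eliminate i0 V. (\<Sum>i\<in>I. y i * v i) < 0"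
        by blast
      then show ?thesis
        by (intro disjI2 fm_eliminate_separation_lift[OF insert.hyps(1) insert.prems(1) insert.hyps(2)])
    qed
  qed
qed

lemma mixtures_image_reindex:
  fixes A :: "'j \<Rightarrow> 'i \<Rightarrow> real"
  assumes "finite J" "z \<in> mixtures (A ` J)"
  shows "\<exists>x. (\<forall>j\<in>J. 0 \<le> x j) \<and> sum x J = 1 \<and> z = (\<lambda>i. \<Sum>j\<in>J. x j * A j i)"
proof -
  obtain q where q: "\<forall>v\<in>A ` J. 0 \<le> q v" "sum q (A ` J) = 1" "z = (\<lambda>i. \<Sum>v\<in>A ` J. q v * v i)"
    using assms(2) by (auto simp: mixtures_def)
  \<comment> \<open>the weight of each vector is shared evenly among the indices mapped to it\<close>
  define c where "c j = real (card {j'\<in>J. A j' = A j})" for j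
  have c_pos: "0 < c j" if "j \<in> J" for j
    using that assms(1) by (auto simp: c_def card_gt_0_iff)
  have reindex: "(\<Sum>j\<in>J. q (A j) / c j * h (A j)) = (\<Sum>v\<in>A ` J. q v * h v)" for h :: "('i \<Rightarrow> real) \<Rightarrow> real"
  proof -
    have "(\<Sum>j\<in>J. q (A j) / c j * h (A j)) = (\<Sum>v\<in>A ` J. \<Sum>j\<in>{j\<in>J. A j = v}. q (A j) / c j * h (A j))"
      using assms(1) by (rule sum.image_gen)
    also have "\<dots> = (\<Sum>v\<in>A ` J. q v * h v)"
    proof (rule sum.cong[OF refl])
      fix v assume "v \<in> A ` J"
      then obtain j0 where j0: "j0 \<in> J" "A j0 = v" by blast
      have "(\<Sum>j\<in>{j\<in>J. A j = v}. q (A j) / c j * h (A j)) = (\<Sum>j\<in>{j\<in>J. A j = v}. q v / c j0 * h v)"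
        using j0(2) by (intro sum.cong) (auto simp: c_def)
      also have "\<dots> = c j0 * (q v / c j0 * h v)"
        using j0(2) by (simp add: c_def)
      also have "\<dots> = q v * h v" using c_pos[OF j0(1)] by simp
      finally show "(\<Sum>j\<in>{j\<in>J. A j = v}. q (A j) / c j * h (A j)) = q v * h v" .
    qed
    finally show ?thesis .
  qed
  show ?thesis
  proof (intro exI[of _ "\<lambda>j. q (A j) / c j"] conjI ballI)
    show "0 \<le> q (A j) / c j" if "j \<in> J" for j using that q(1) c_pos[OF that] by simp
    show "(\<Sum>j\<in>J. q (A j) / c j) = 1" using reindex[of "\<lambda>_. 1"] q(2) by simp
    show "z = (\<lambda>i. \<Sum>j\<in>J. q (A j) / c j * A j i)" using reindex[of "\<lambda>v. v i" for i] q(3) by simp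
  qed
qed

theorem ville_alternative:
  fixes A :: "'j \<Rightarrow> 'i \<Rightarrow> real"
  assumes "finite I" "finite J" "J \<noteq> {}"
  shows "(\<exists>x. (\<forall>j\<in>J. 0 \<le> x j) \<and> sum x J = 1 \<and> (\<forall>i\<in>I. 0 \<le> (\<Sum>j\<in>J. x j * A j i)))
    \<or> (\<exists>y. (\<forall>i\<in>I. 0 \<le> y i) \<and> (\<forall>j\<in>J. (\<Sum>i\<in>I. y i * A j i) < 0))"
proof -
  have "finite (A ` J)" "A ` J \<noteq> {}" using assms by auto
  from ville_alternative_mixtures[OF assms(1) this] show ?thesis
  proof
    assume "\<exists>z\<in>mixtures (A ` J). \<forall>i\<in>I. 0 \<le> z i"
    then obtain z where z: "z \<in> mixtures (A ` J)" "\<forall>i\<in>I. 0 \<le> z i" by blast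
    obtain x where "\<forall>j\<in>J. 0 \<le> x j" "sum x J = 1" "z = (\<lambda>i. \<Sum>j\<in>J. x j * A j i)"
      using mixtures_image_reindex[OF assms(2) z(1)] by blast
    then show ?thesis using z(2) by auto
  qed auto
qed

section \<open>Existence of correlated equilibria\<close>

lemma balanced_distribution_exists:
  fixes w :: "'a \<Rightarrow> 'a \<Rightarrow> real"
  assumes T: "finite T" "T \<noteq> {}" and w: "\<forall>a\<in>T. \<forall>b\<in>T. 0 \<le> w a b"
  shows "\<exists>q. (\<forall>a\<in>T. 0 \<le> q a) \<and> sum q T = 1
    \<and> (\<forall>b\<in>T. (\<Sum>a\<in>T. q a * w a b) = q b * (\<Sum>c\<in>T. w b c))"
proof -
  \<comment> \<open>the generator matrix of the Markov chain with transition rates w\<close>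
  define G where "G a b = w a b - (if a = b then (\<Sum>c\<in>T. w a c) else 0)" for a b
  have column: "(\<Sum>a\<in>T. q a * G a b) = (\<Sum>a\<in>T. q a * w a b) - q b * (\<Sum>c\<in>T. w b c)"
    if "b \<in> T" for q b
  proof -
    have "(\<Sum>a\<in>T. q a * G a b) = (\<Sum>a\<in>T. q a * w a b - (if a = b then q b * (\<Sum>c\<in>T. w b c) else 0))"
      by (intro sum.cong) (auto simp: G_def right_diff_distrib)
    then show ?thesis using T(1) that by (simp add: sum_subtractf)
  qed
  have row: "(\<Sum>b\<in>T. y b * G a b) = (\<Sum>b\<in>T. w a b * (y b - y a))" if "a \<in> T" for y a
  proof -
    have "(\<Sum>b\<in>T. y b * G a b) = (\<Sum>b\<in>T. y b * w a b - (if a = b then y a * (\<Sum>c\<in>T. w a c) else 0))"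
      by (intro sum.cong) (auto simp: G_def right_diff_distrib)
    then show ?thesis
      using T(1) that by (simp add: sum_subtractf right_diff_distrib sum_distrib_left mult.commute)
  qed
  from ville_alternative[OF T(1) T, of G] show ?thesis
  proof
    assume "\<exists>q. (\<forall>a\<in>T. 0 \<le> q a) \<and> sum q T = 1 \<and> (\<forall>b\<in>T. 0 \<le> (\<Sum>a\<in>T. q a * G a b))"
    then obtain q where q: "\<forall>a\<in>T. 0 \<le> q a" "sum q T = 1" "\<forall>b\<in>T. 0 \<le> (\<Sum>a\<in>T. q a * G a b)"
      by blast
    \<comment> \<open>the rows of G sum to zero, so the nonnegative inflows must all vanish\<close>
    have "(\<Sum>b\<in>T. \<Sum>a\<in>T. q a * G a b) = (\<Sum>a\<in>T. q a * (\<Sum>b\<in>T. G a b))"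
      by (subst sum.swap) (simp add: sum_distrib_left)
    also have "\<dots> = 0" using row[of _ "\<lambda>_. 1"] by simp
    finally have "\<forall>b\<in>T. (\<Sum>a\<in>T. q a * G a b) = 0"
      using sum_nonneg_eq_0_iff[OF T(1), of "\<lambda>b. \<Sum>a\<in>T. q a * G a b"] q(3) by simp
    then show ?thesis using q(1,2) column by (intro exI[of _ q]) auto
  next
    assume "\<exists>y. (\<forall>b\<in>T. 0 \<le> y b) \<and> (\<forall>a\<in>T. (\<Sum>b\<in>T. y b * G a b) < 0)"
    then obtain y where y: "\<forall>a\<in>T. (\<Sum>b\<in>T. y b * G a b) < 0" by blast
    have "Min (y ` T) \<in> y ` T" using T by simp
    then obtain a0 where a0: "a0 \<in> T" "y a0 = Min (y ` T)" by auto
    \<comment> \<open>at a minimiser of y the row of G weighted by y is nonnegative\<close>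
    have "0 \<le> (\<Sum>b\<in>T. w a0 b * (y b - y a0))"
      using w a0 T(1) by (intro sum_nonneg) auto
    then show ?thesis using y row[OF a0(1)] a0(1) by force
  qed
qed

lemma sum_balanced_differences:
  fixes q U :: "'a \<Rightarrow> real" and w :: "'a \<Rightarrow> 'a \<Rightarrow> real"
  assumes "\<forall>b\<in>T. (\<Sum>a\<in>T. q a * w a b) = q b * (\<Sum>c\<in>T. w b c)"
  shows "(\<Sum>a\<in>T. \<Sum>b\<in>T. q a * w a b * (U a - U b)) = 0"
proof -
  have "(\<Sum>a\<in>T. \<Sum>b\<in>T. q a * w a b * U b) = (\<Sum>b\<in>T. U b * (\<Sum>a\<in>T. q a * w a b))"
    by (subst sum.swap) (simp add: sum_distrib_left mult_ac)
  also have "\<dots> = (\<Sum>a\<in>T. \<Sum>b\<in>T. q a * w a b * U a)"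
    using assms by (simp add: sum_distrib_left mult_ac)
  finally show ?thesis by (simp add: right_diff_distrib sum_subtractf)
qed

lemma sum_convex_neg:
  fixes x F :: "'a \<Rightarrow> real"
  assumes "finite P" "\<forall>s\<in>P. 0 \<le> x s" "sum x P = 1" "\<forall>s\<in>P. F s < 0"
  shows "(\<Sum>s\<in>P. x s * F s) < 0"
proof -
  have "P \<noteq> {}" using assms(3) by auto
  then have "Max (F ` P) < 0" using assms(1,4) by simp
  have "(\<Sum>s\<in>P. x s * F s) \<le> (\<Sum>s\<in>P. x s * Max (F ` P))"
    using assms(1,2) by (intro sum_mono mult_left_mono) auto
  also have "\<dots> = Max (F ` P)" using assms(3) by (simp add: sum_distrib_right[symmetric])
  finally show ?thesis using \<open>Max (F ` P) < 0\<close> by simp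
qed

lemma sum_PiE_remove:
  assumes "p \<in> N"
  shows "(\<Sum>s\<in>PiE N S. f s) = (\<Sum>a\<in>S p. \<Sum>g\<in>PiE (N - {p}) S. f (g(p := a)))"
proof -
  have "PiE N S = (\<lambda>(a, g). g(p := a)) ` (S p \<times> PiE (N - {p}) S)"
    using PiE_insert_eq[of p "N - {p}" S] assms by (simp add: insert_absorb)
  moreover have "inj_on (\<lambda>(a, g). g(p := a)) (S p \<times> PiE (N - {p}) S)"
    by (rule inj_combinator) simp
  ultimately have "(\<Sum>s\<in>PiE N S. f s) = (\<Sum>(a, g)\<in>S p \<times> PiE (N - {p}) S. f (g(p := a)))"
    by (simp add: sum.reindex case_prod_unfold)
  then show ?thesis by (simp add: sum.cartesian_product)
qed

lemma finite_profiles: "finite_game N S \<Longrightarrow> finite (profiles N S)"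
  by (simp add: finite_game_def profiles_def finite_PiE)

lemma fun_upd_in_profiles:
  "s \<in> profiles N S \<Longrightarrow> p \<in> N \<Longrightarrow> a \<in> S p \<Longrightarrow> s(p := a) \<in> profiles N S"
  by (auto simp: profiles_def PiE_iff extensional_def)

definition ce_gain :: "('p \<Rightarrow> ('p \<Rightarrow> 's) \<Rightarrow> real) \<Rightarrow> 'p \<Rightarrow> 's \<Rightarrow> 's \<Rightarrow> ('p \<Rightarrow> 's) \<Rightarrow> real" where
  "ce_gain u p a b s = (if s p = a then u p s - u p (s(p := b)) else 0)"

lemma ce_gain_fun_upd:
  "ce_gain u p a b (s(p := c)) = (if c = a then u p (s(p := a)) - u p (s(p := b)) else 0)"
  by (simp add: ce_gain_def)

lemma CE_P_ce_gain:
  assumes "finite_game N S"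
  shows "CE_P N S u P = {x \<in> distributions N S. \<forall>p\<in>P. \<forall>a\<in>S p. \<forall>b\<in>S p. a \<noteq> b \<longrightarrow>
    0 \<le> (\<Sum>s\<in>profiles N S. x s * ce_gain u p a b s)}"
proof -
  have "(\<Sum>s\<in>{s\<in>profiles N S. s p = a}. x s * (u p s - u p (s(p := b))))
      = (\<Sum>s\<in>profiles N S. x s * ce_gain u p a b s)" for x p a b
    using finite_profiles[OF assms] by (simp add: sum.inter_filter ce_gain_def) (intro sum.cong; simp)
  then show ?thesis by (simp add: CE_P_def)
qed

lemma product_in_distributions:
  assumes "finite_game N S" "\<forall>p\<in>N. (\<forall>a\<in>S p. 0 \<le> Q p a) \<and> sum (Q p) (S p) = 1"
  shows "(\<lambda>s. \<Prod>p\<in>N. Q p (s p)) \<in> distributions N S"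
proof -
  have "(\<Sum>s\<in>profiles N S. \<Prod>p\<in>N. Q p (s p)) = (\<Prod>p\<in>N. sum (Q p) (S p))"
    using assms(1) by (simp add: profiles_def prod_sum_PiE finite_game_def)
  then show ?thesis
    using assms(2) by (auto simp: distributions_def profiles_def PiE_iff intro!: prod_nonneg)
qed

lemma sum_product_ce_gains_eq_0:
  assumes "finite_game N S" "p \<in> N"
    and balanced: "\<forall>b\<in>S p. (\<Sum>a\<in>S p. Q p a * w a b) = Q p b * (\<Sum>c\<in>S p. w b c)"
  shows "(\<Sum>s\<in>profiles N S. (\<Prod>q\<in>N. Q q (s q)) * (\<Sum>a\<in>S p. \<Sum>b\<in>S p. w a b * ce_gain u p a b s)) = 0"
proof -
  let ?G = "PiE (N - {p}) S"
  define X where "X g = (\<Prod>q\<in>N - {p}. Q q (g q))" for g :: "'a \<Rightarrow> 'b"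
  define U where "U g a = u p (g(p := a))" for g a
  have fin: "finite N" "finite (S p)" using assms(1,2) by (auto simp: finite_game_def)
  have product: "(\<Prod>q\<in>N. Q q ((g(p := a)) q)) = Q p a * X g" for g a
    using fin(1) assms(2) by (simp add: X_def prod.remove)
  have gains: "(\<Sum>a\<in>S p. \<Sum>b\<in>S p. w a b * ce_gain u p a b (g(p := c)))
      = (\<Sum>b\<in>S p. w c b * (U g c - U g b))" if "c \<in> S p" for g c
  proof -
    have "(\<Sum>a\<in>S p. \<Sum>b\<in>S p. w a b * ce_gain u p a b (g(p := c)))
        = (\<Sum>a\<in>S p. if c = a then \<Sum>b\<in>S p. w a b * (U g a - U g b) else 0)"
      by (intro sum.cong) (auto simp: ce_gain_fun_upd U_def)
    then show ?thesis using fin(2) that by simp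
  qed
  have "(\<Sum>s\<in>profiles N S. (\<Prod>q\<in>N. Q q (s q)) * (\<Sum>a\<in>S p. \<Sum>b\<in>S p. w a b * ce_gain u p a b s))
      = (\<Sum>c\<in>S p. \<Sum>g\<in>?G. X g * (\<Sum>b\<in>S p. Q p c * w c b * (U g c - U g b)))"
    unfolding profiles_def sum_PiE_remove[OF assms(2)] 
    by (intro sum.cong refl, simp only: product gains) (simp add: sum_distrib_left mult_ac)
  also have "\<dots> = (\<Sum>g\<in>?G. X g * (\<Sum>a\<in>S p. \<Sum>b\<in>S p. Q p a * w a b * (U g a - U g b)))"
    by (subst sum.swap) (simp add: sum_distrib_left)
  also have "\<dots> = 0" using sum_balanced_differences[OF balanced] by simp
  finally show ?thesis .
qed

lemma product_of_balanced_neutralizes_ce_gains: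
  assumes "finite_game N S" and y: "\<forall>p\<in>N. \<forall>a\<in>S p. \<forall>b\<in>S p. 0 \<le> y p a b"
  shows "\<exists>x\<in>distributions N S.
    (\<Sum>s\<in>profiles N S. x s * (\<Sum>p\<in>N. \<Sum>a\<in>S p. \<Sum>b\<in>S p. y p a b * ce_gain u p a b s)) = 0"
proof -
  have "\<forall>p\<in>N. \<exists>q. (\<forall>a\<in>S p. 0 \<le> q a) \<and> sum q (S p) = 1
      \<and> (\<forall>b\<in>S p. (\<Sum>a\<in>S p. q a * y p a b) = q b * (\<Sum>c\<in>S p. y p b c))"
    using assms(1) y by (simp add: finite_game_def balanced_distribution_exists)
  from bchoice[OF this] obtain Q where Q: "\<forall>p\<in>N. (\<forall>a\<in>S p. 0 \<le> Q p a) \<and> sum (Q p) (S p) = 1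
      \<and> (\<forall>b\<in>S p. (\<Sum>a\<in>S p. Q p a * y p a b) = Q p b * (\<Sum>c\<in>S p. y p b c))"
    by blast
  let ?x = "\<lambda>s. \<Prod>p\<in>N. Q p (s p)"
  have "(\<Sum>s\<in>profiles N S. ?x s * (\<Sum>p\<in>N. \<Sum>a\<in>S p. \<Sum>b\<in>S p. y p a b * ce_gain u p a b s))
      = (\<Sum>p\<in>N. \<Sum>s\<in>profiles N S. ?x s * (\<Sum>a\<in>S p. \<Sum>b\<in>S p. y p a b * ce_gain u p a b s))"
    unfolding sum_distrib_left by (rule sum.swap)
  also have "\<dots> = 0"
    using Q sum_product_ce_gains_eq_0[where w = "y _", OF assms(1)] by simp
  moreover have "?x \<in> distributions N S"
    using Q by (intro product_in_distributions[where Q = Q, OF assms(1)]) blast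
  ultimately show ?thesis by auto
qed

theorem correlated_equilibrium_exists:
  assumes "finite_game N S"
  shows "\<exists>x. x \<in> CE_P N S u N"
proof -
  define R where "R = Sigma N (\<lambda>p. S p \<times> S p)"
  have fin: "finite R" "finite (profiles N S)" "profiles N S \<noteq> {}"
    using assms by (auto simp: R_def finite_game_def profiles_def finite_PiE PiE_eq_empty_iff)
  have sum_R: "(\<Sum>i\<in>R. y i * ce_gain u (fst i) (fst (snd i)) (snd (snd i)) s)
      = (\<Sum>p\<in>N. \<Sum>a\<in>S p. \<Sum>b\<in>S p. y (p, a, b) * ce_gain u p a b s)" for y s
    using assms by (simp add: R_def sum.Sigma sum.cartesian_product finite_game_def split_def)
  from ville_alternative[OF fin, of "\<lambda>s i. ce_gain u (fst i) (fst (snd i)) (snd (snd i)) s"]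
  show ?thesis
  proof
    assume "\<exists>x. (\<forall>s\<in>profiles N S. 0 \<le> x s) \<and> sum x (profiles N S) = 1 \<and>
      (\<forall>i\<in>R. 0 \<le> (\<Sum>s\<in>profiles N S. x s * ce_gain u (fst i) (fst (snd i)) (snd (snd i)) s))"
    then obtain x where x: "\<forall>s\<in>profiles N S. 0 \<le> x s" "sum x (profiles N S) = 1"
      "\<forall>p\<in>N. \<forall>a\<in>S p. \<forall>b\<in>S p. 0 \<le> (\<Sum>s\<in>profiles N S. x s * ce_gain u p a b s)"
      by (auto simp: R_def)
    then have "x \<in> CE_P N S u N" by (simp add: CE_P_ce_gain[OF assms] distributions_def)
    then show ?thesis by blast
  next
    assume "\<exists>y. (\<forall>i\<in>R. 0 \<le> y i) \<and>
      (\<forall>s\<in>profiles N S. (\<Sum>i\<in>R. y i * ce_gain u (fst i) (fst (snd i)) (snd (snd i)) s) < 0)"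
    then obtain y where "\<forall>i\<in>R. 0 \<le> y i"
      "\<forall>s\<in>profiles N S. (\<Sum>i\<in>R. y i * ce_gain u (fst i) (fst (snd i)) (snd (snd i)) s) < 0"
      by blast
    then have y: "\<forall>p\<in>N. \<forall>a\<in>S p. \<forall>b\<in>S p. 0 \<le> y (p, a, b)"
      "\<forall>s\<in>profiles N S. (\<Sum>p\<in>N. \<Sum>a\<in>S p. \<Sum>b\<in>S p. y (p, a, b) * ce_gain u p a b s) < 0"
      by (simp_all add: R_def sum_R[symmetric])
    obtain x where x: "x \<in> distributions N S"
      "(\<Sum>s\<in>profiles N S. x s * (\<Sum>p\<in>N. \<Sum>a\<in>S p. \<Sum>b\<in>S p. y (p, a, b) * ce_gain u p a b s)) = 0"
      using product_of_balanced_neutralizes_ce_gains[OF assms, of "\<lambda>p a b. y (p, a, b)" u] y(1) by blast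
    have "(\<Sum>s\<in>profiles N S. x s * (\<Sum>p\<in>N. \<Sum>a\<in>S p. \<Sum>b\<in>S p. y (p, a, b) * ce_gain u p a b s)) < 0"
      using x(1) y(2) by (intro sum_convex_neg[OF fin(2)]) (auto simp: distributions_def)
    then show ?thesis using x(2) by simp
  qed
qed

section \<open>Single leaders against a coarse correlated equilibrium\<close>

text \<open>The law of \<open>s(p := b)\<close> when s is distributed according to x.\<close>
definition redirect :: "('p \<Rightarrow> 's set) \<Rightarrow> 'p \<Rightarrow> 's \<Rightarrow> (('p \<Rightarrow> 's) \<Rightarrow> real) \<Rightarrow> ('p \<Rightarrow> 's) \<Rightarrow> real" where
  "redirect S p b x s = (if s p = b then \<Sum>a\<in>S p. x (s(p := a)) else 0)"

lemma sum_redirect: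
  assumes "finite_game N S" "p \<in> N" "b \<in> S p"
  shows "(\<Sum>s\<in>profiles N S. redirect S p b x s * h s) = (\<Sum>s\<in>profiles N S. x s * h (s(p := b)))"
proof -
  have "finite (S p)" using assms(1,2) by (simp add: finite_game_def)
  let ?G = "PiE (N - {p}) S"
  have "(\<Sum>s\<in>profiles N S. redirect S p b x s * h s)
      = (\<Sum>a\<in>S p. \<Sum>g\<in>?G. if a = b then (\<Sum>a'\<in>S p. x (g(p := a'))) * h (g(p := b)) else 0)"
    unfolding profiles_def sum_PiE_remove[OF assms(2)] by (intro sum.cong refl) (simp add: redirect_def)
  also have "\<dots> = (\<Sum>g\<in>?G. (\<Sum>a\<in>S p. x (g(p := a))) * h (g(p := b)))"
    using assms(3) \<open>finite (S p)\<close> by (subst sum.swap) simp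
  also have "\<dots> = (\<Sum>g\<in>?G. \<Sum>a\<in>S p. x (g(p := a)) * h (g(p := b)))"
    by (simp add: sum_distrib_right)
  also have "\<dots> = (\<Sum>s\<in>profiles N S. x s * h (s(p := b)))"
    unfolding profiles_def sum_PiE_remove[OF assms(2)] by (subst sum.swap) simp
  finally show ?thesis .
qed

definition deviation_util ::
  "'p set \<Rightarrow> ('p \<Rightarrow> 's set) \<Rightarrow> ('p \<Rightarrow> ('p \<Rightarrow> 's) \<Rightarrow> real) \<Rightarrow> 'p \<Rightarrow> (('p \<Rightarrow> 's) \<Rightarrow> real) \<Rightarrow> 's \<Rightarrow> real"
where
  "deviation_util N S u p x b = (\<Sum>s\<in>profiles N S. x s * u p (s(p := b)))"

lemma CCE_deviation_util_le:
  assumes "x \<in> CCE N S u" "p \<in> N" "b \<in> S p"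
  shows "deviation_util N S u p x b \<le> exp_util N S u p x"
  using assms by (auto simp: CCE_def deviation_util_def exp_util_def right_diff_distrib sum_subtractf)

lemma redirect_in_distributions:
  assumes "finite_game N S" "x \<in> distributions N S" "p \<in> N" "b \<in> S p"
  shows "redirect S p b x \<in> distributions N S"
proof -
  have "0 \<le> redirect S p b x s" if "s \<in> profiles N S" for s
    using assms(2,3) that by (auto simp: redirect_def distributions_def intro!: sum_nonneg fun_upd_in_profiles)
  moreover have "(\<Sum>s\<in>profiles N S. redirect S p b x s) = 1"
    using sum_redirect[OF assms(1,3,4), of x "\<lambda>_. 1"] assms(2) by (simp add: distributions_def)
  ultimately show ?thesis by (simp add: distributions_def)
qed

lemma exp_util_redirect:
  assumes "finite_game N S" "p \<in> N" "b \<in> S p"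
  shows "exp_util N S u p (redirect S p b x) = deviation_util N S u p x b"
  unfolding exp_util_def deviation_util_def by (rule sum_redirect[OF assms])

lemma redirect_best_deviation_in_CE_P:
  assumes "finite_game N S" "x \<in> distributions N S" "p \<in> N" "b \<in> S p"
    and best: "\<forall>b'\<in>S p. deviation_util N S u p x b' \<le> deviation_util N S u p x b"
  shows "redirect S p b x \<in> CE_P N S u {p}"
proof -
  have "0 \<le> (\<Sum>s\<in>profiles N S. redirect S p b x s * ce_gain u p a b' s)" if "b' \<in> S p" for a b'
  proof -
    have "(\<Sum>s\<in>profiles N S. redirect S p b x s * ce_gain u p a b' s)
        = (if b = a then deviation_util N S u p x b - deviation_util N S u p x b' else 0)"
      unfolding sum_redirect[OF assms(1,3,4)] ce_gain_fun_upd
      by (simp add: deviation_util_def right_diff_distrib sum_subtractf)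
    then show ?thesis using best that by auto
  qed
  then show ?thesis
    using redirect_in_distributions[OF assms(1-4)] by (simp add: CE_P_ce_gain[OF assms(1)])
qed

lemma CCE_exp_util_ge_CE_P_singleton:
  assumes "finite_game N S" "x \<in> CCE N S u" "p \<in> N"
  shows "\<exists>z\<in>CE_P N S u {p}. exp_util N S u p z \<le> exp_util N S u p x"
proof -
  have fin: "finite (S p)" "S p \<noteq> {}" using assms(1,3) by (auto simp: finite_game_def)
  let ?D = "deviation_util N S u p x"
  have "Max (?D ` S p) \<in> ?D ` S p" using fin by simp
  then obtain b where b: "b \<in> S p" "?D b = Max (?D ` S p)" by auto
  then have "\<forall>b'\<in>S p. ?D b' \<le> ?D b" using fin by simp
  then have "redirect S p b x \<in> CE_P N S u {p}"
    using assms b(1) by (intro redirect_best_deviation_in_CE_P) (auto simp: CCE_def)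
  moreover have "exp_util N S u p (redirect S p b x) \<le> exp_util N S u p x"
    using exp_util_redirect[OF assms(1,3) b(1)] CCE_deviation_util_le[OF assms(2,3) b(1)] by simp
  ultimately show ?thesis by blast
qed

lemma CE_P_antimono: "P \<subseteq> Q \<Longrightarrow> CE_P N S u Q \<subseteq> CE_P N S u P"
  unfolding CE_P_def by blast

lemma CE_P_empty: "CE_P N S u {} = distributions N S"
  by (simp add: CE_P_def)

theorem mainTheorem17:
  fixes N :: "'p set" and S :: "'p \<Rightarrow> 's set" and u :: "'p \<Rightarrow> ('p \<Rightarrow> 's) \<Rightarrow> real"
  assumes "finite_game N S"
  shows "CCE N S u \<subseteq> S_NF N S u"
proof
  fix x assume x: "x \<in> CCE N S u"
  obtain c where c: "c \<in> CE_P N S u N" using correlated_equilibrium_exists[OF assms] by blast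
  have "\<forall>p\<in>N. \<exists>z\<in>CE_P N S u {p}. exp_util N S u p z \<le> exp_util N S u p x"
    using CCE_exp_util_ge_CE_P_singleton[OF assms x] by blast
  then obtain z where z: "\<forall>p\<in>N. z p \<in> CE_P N S u {p} \<and> exp_util N S u p (z p) \<le> exp_util N S u p x"
    by (metis bchoice)
  define xx where "xx \<pi> = (case \<pi> of [] \<Rightarrow> x | [p] \<Rightarrow> z p | _ \<Rightarrow> c)" for \<pi> :: "'p list"
  have "xx \<pi> \<in> CE_P N S u (set \<pi>)" if "set \<pi> \<subseteq> N" for \<pi>
  proof -
    consider "\<pi> = []" | p where "\<pi> = [p]" | p q \<pi>' where "\<pi> = p # q # \<pi>'"
      by (cases \<pi> rule: remdups_adj.cases) auto
    then show ?thesis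
    proof cases
      case 1
      then show ?thesis using x by (simp add: xx_def CE_P_empty CCE_def)
    next
      case 2
      then show ?thesis using z that by (simp add: xx_def)
    next
      case 3
      then show ?thesis using c CE_P_antimono[OF that] by (auto simp: xx_def)
    qed
  qed
  then have "xx \<in> SG_X_stable N S u N {}"
    using z by (simp add: SG_X_stable_def SG_X_def ordered_subsets_def stable_at_def xx_def)
  moreover have "xx [] = x" by (simp add: xx_def)
  ultimately show "x \<in> S_NF N S u" unfolding S_NF_def by blast
qed

end
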